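(* Let $G=(V,E,w)$ be an undirected graph without self-loops, with $n\ge 2$ vertices, positive edge weights and conductance $\Phi_G$. Then every optimal HC tree $\mathcal{T}^*$ of $G$ (equivalently, $\mathsf{OPT}_G$) satisfies \[ \mathrm{cost}_G(\mathcal{T}^* ) \ge \frac{2\Phi_G}{9}\cdot \max\left\{\frac{\mathrm{vol}(G)^2}{d_{\max}},\; d_{\min}\cdot n^2\right\} = \frac{2\Phi_G}{9}\cdot n\cdot \mathrm{vol}(G)\cdot \max\left\{\frac{d_{\mathrm{avg}}}{d_{\max}},\frac{d_{\min}}{d_{\mathrm{avg}}}\right\}. \]
   Context: $d_u=\sum_{v} w_{uv}$; $d_{\min},d_{\max}$ are the minimum and maximum degree, and $d_{\mathrm{avg}}=\sum_u d_u/n$. $\mathrm{vol}(S)=\sum_{u\in S}d_u$, $\mathrm{vol}(G)=\mathrm{vol}(V)$. For $S\subseteq V$, $w(S,T)$ is the total weight of edges between $S$ and $T$; the conductance of nonempty $S$ is $\Phi_G(S)=w(S,V\setminus S)/\mathrm{vol}(S)$, and $\Phi_G=\min\{\Phi_G(S): \emptyset\ne S\subset V,\ \mathrm{vol}(S)\le \mathrm{vol}(V)/2\}$. An HC tree of $G$ is a rooted binary tree whose leaves are in bijection with $V$; internal nodes are identified with the vertex sets of their leaves; $u\vee v$ is the lowest common ancestor. $\mathrm{cost}_G(\mathcal{T})=\sum_{\{u,v\}\in E}w_{uv}|\mathsf{leaves}(\mathcal{T}[u\vee v])|$, and $\mathsf{OPT}_G=\min_{\mathcal{T}}\mathrm{cost}_G(\mathcal{T})$.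 *)

theory Defs
  imports Complex_Main
begin

text \<open>An undirected weighted graph on a finite vertex set V with weight function w:
  w is symmetric, nonnegative, zero on the diagonal (no self-loops); the edges are
  the unordered pairs {u,v} with w u v > 0 (so all edge weights are positive).\<close>

definition wgraph :: "'a set \<Rightarrow> ('a \<Rightarrow> 'a \<Rightarrow> real) \<Rightarrow> bool" where
  "wgraph V w \<longleftrightarrow> finite V \<and> (\<forall>u v. w u v = w v u) \<and> (\<forall>u v. w u v \<ge> 0)
     \<and> (\<forall>u. w u u = 0) \<and> (\<forall>u v. w u v \<noteq> 0 \<longrightarrow> u \<in> V \<and> v \<in> V)"

definition deg :: "'a set \<Rightarrow> ('a \<Rightarrow> 'a \<Rightarrow> real) \<Rightarrow> 'a \<Rightarrow> real" where
  "deg V w u = (\<Sum>v\<in>V. w u v)"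

definition dmin :: "'a set \<Rightarrow> ('a \<Rightarrow> 'a \<Rightarrow> real) \<Rightarrow> real" where
  "dmin V w = Min (deg V w ` V)"

definition dmax :: "'a set \<Rightarrow> ('a \<Rightarrow> 'a \<Rightarrow> real) \<Rightarrow> real" where
  "dmax V w = Max (deg V w ` V)"

definition davg :: "'a set \<Rightarrow> ('a \<Rightarrow> 'a \<Rightarrow> real) \<Rightarrow> real" where
  "davg V w = (\<Sum>u\<in>V. deg V w u) / real (card V)"

definition vol :: "'a set \<Rightarrow> ('a \<Rightarrow> 'a \<Rightarrow> real) \<Rightarrow> 'a set \<Rightarrow> real" where
  "vol V w S = (\<Sum>u\<in>S. deg V w u)"

definition cut_weight :: "('a \<Rightarrow> 'a \<Rightarrow> real) \<Rightarrow> 'a set \<Rightarrow> 'a set \<Rightarrow> real" where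
  "cut_weight w S T = (\<Sum>u\<in>S. \<Sum>v\<in>T. w u v)"

definition set_conductance :: "'a set \<Rightarrow> ('a \<Rightarrow> 'a \<Rightarrow> real) \<Rightarrow> 'a set \<Rightarrow> real" where
  "set_conductance V w S = cut_weight w S (V - S) / vol V w S"

definition conductance :: "'a set \<Rightarrow> ('a \<Rightarrow> 'a \<Rightarrow> real) \<Rightarrow> real" where
  "conductance V w = Min (set_conductance V w `
      {S. S \<noteq> {} \<and> S \<subset> V \<and> vol V w S \<le> vol V w V / 2})"

datatype 'a hctree = Leaf 'a | Node "'a hctree" "'a hctree"

fun leaves :: "'a hctree \<Rightarrow> 'a list" where
  "leaves (Leaf a) = [a]"
| "leaves (Node l r) = leaves l @ leaves r"

fun subtrees :: "'a hctree \<Rightarrow> 'a hctree set" where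
  "subtrees (Leaf a) = {Leaf a}"
| "subtrees (Node l r) = insert (Node l r) (subtrees l \<union> subtrees r)"

definition is_hctree :: "'a set \<Rightarrow> 'a hctree \<Rightarrow> bool" where
  "is_hctree V T \<longleftrightarrow> distinct (leaves T) \<and> set (leaves T) = V"

text \<open>Number of leaves of the subtree rooted at the lowest common ancestor of u and v.\<close>
definition lca_size :: "'a hctree \<Rightarrow> 'a \<Rightarrow> 'a \<Rightarrow> nat" where
  "lca_size T u v = Min {length (leaves S) | S. S \<in> subtrees T \<and> u \<in> set (leaves S) \<and> v \<in> set (leaves S)}"

text \<open>cost = sum over edges {u,v} of w(u,v) times |leaves(T[u \<or> v])|; each unordered
  edge appears twice among the ordered pairs, hence the factor 1/2.\<close>
definition hc_cost :: "'a set \<Rightarrow> ('a \<Rightarrow> 'a \<Rightarrow> real) \<Rightarrow> 'a hctree \<Rightarrow> real" where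
  "hc_cost V w T = (1/2) * (\<Sum>u\<in>V. \<Sum>v\<in>V. w u v * real (lca_size T u v))"

definition optimal_hctree :: "'a set \<Rightarrow> ('a \<Rightarrow> 'a \<Rightarrow> real) \<Rightarrow> 'a hctree \<Rightarrow> bool" where
  "optimal_hctree V w T \<longleftrightarrow> is_hctree V T \<and> (\<forall>T'. is_hctree V T' \<longrightarrow> hc_cost V w T \<le> hc_cost V w T')"

end

theory Submission
  imports Defs
begin

text \<open>Let level k be the partition of V into the maximal clusters of T with at most k leaves
  (singletons for k = 0), and level_cut k the weight of the edges it cuts. An edge whose endpoints
  first meet in a cluster of s leaves is cut exactly at the levels k < s, so twice the cost of T
  is the sum of level_cut k over k < n. A cluster X of level k has boundary weight at least
  \<open>\<Phi> \<cdot> min (vol X) (vol V - vol X)\<close>. If \<open>2 k d\<^sub>m\<^sub>a\<^sub>x \<le> vol V\<close>, every cluster has at most half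
  the volume, so level_cut k \<ge> \<open>\<Phi> vol V\<close>; if \<open>2 k \<le> n\<close>, both sides of every cluster have at
  least |X| vertices, so level_cut k \<ge> \<open>\<Phi> d\<^sub>m\<^sub>i\<^sub>n n\<close>. Summing over these levels bounds the cost
  below by \<open>\<Phi> vol V\<^sup>2 / (4 d\<^sub>m\<^sub>a\<^sub>x)\<close> and by \<open>\<Phi> d\<^sub>m\<^sub>i\<^sub>n n\<^sup>2 / 4\<close>, which is more than required.
  The identity on the right is just \<open>vol V = n d\<^sub>a\<^sub>v\<^sub>g\<close>.\<close>

lemma length_leaves_pos: "0 < length (leaves S)"
  by (induction S) auto

lemma finite_subtrees: "finite (subtrees S)"
  by (induction S) auto

lemma self_in_subtrees: "S \<in> subtrees S"
  by (cases S) auto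

lemma leaves_subtree:
  "S' \<in> subtrees S \<Longrightarrow> set (leaves S') \<subseteq> set (leaves S) \<and> length (leaves S') \<le> length (leaves S)"
  by (induction S) auto

fun lca_card :: "'a hctree \<Rightarrow> 'a \<Rightarrow> 'a \<Rightarrow> nat" where
  "lca_card (Leaf a) u v = 1"
| "lca_card (Node l r) u v =
     (if u \<in> set (leaves l) \<and> v \<in> set (leaves l) then lca_card l u v
      else if u \<in> set (leaves r) \<and> v \<in> set (leaves r) then lca_card r u v
      else length (leaves (Node l r)))"

definition common_subtree_sizes :: "'a hctree \<Rightarrow> 'a \<Rightarrow> 'a \<Rightarrow> nat set" where
  "common_subtree_sizes S u v =
     {length (leaves S') | S'. S' \<in> subtrees S \<and> u \<in> set (leaves S') \<and> v \<in> set (leaves S')}"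

lemma lca_size_eq_Min: "lca_size S u v = Min (common_subtree_sizes S u v)"
  by (simp add: lca_size_def common_subtree_sizes_def)

lemma finite_common_subtree_sizes: "finite (common_subtree_sizes S u v)"
  unfolding common_subtree_sizes_def using finite_subtrees[of S] by auto

lemma common_subtree_sizes_eq_empty_iff:
  "common_subtree_sizes S u v = {} \<longleftrightarrow> \<not> (u \<in> set (leaves S) \<and> v \<in> set (leaves S))"
  unfolding common_subtree_sizes_def using leaves_subtree[of _ S] self_in_subtrees[of S] by blast

lemma common_subtree_sizes_le: "x \<in> common_subtree_sizes S u v \<Longrightarrow> x \<le> length (leaves S)"
  unfolding common_subtree_sizes_def using leaves_subtree by auto

lemma common_subtree_sizes_Node:
  assumes "u \<in> set (leaves (Node l r))" "v \<in> set (leaves (Node l r))"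
  shows "common_subtree_sizes (Node l r) u v =
    insert (length (leaves (Node l r))) (common_subtree_sizes l u v \<union> common_subtree_sizes r u v)"
  using assms unfolding common_subtree_sizes_def by (auto 0 3 simp del: leaves.simps)

lemma lca_size_eq_lca_card:
  "distinct (leaves S) \<Longrightarrow> u \<in> set (leaves S) \<Longrightarrow> v \<in> set (leaves S) \<Longrightarrow> lca_size S u v = lca_card S u v"
proof (induction S)
  case (Leaf a)
  then show ?case by (simp add: lca_size_eq_Min common_subtree_sizes_def)
next
  case (Node l r)
  let ?n = "length (leaves (Node l r))"
  let ?A = "common_subtree_sizes l u v \<union> common_subtree_sizes r u v"
  have less: "x < ?n" if "x \<in> ?A" for x
  proof -
    have "x \<le> length (leaves l) \<or> x \<le> length (leaves r)"
      using that common_subtree_sizes_le[of x l u v] common_subtree_sizes_le[of x r u v] by blast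
    then show ?thesis
      using length_leaves_pos[of l] length_leaves_pos[of r] unfolding leaves.simps length_append by linarith
  qed
  have "lca_size (Node l r) u v = Min (insert ?n ?A)"
    using Node.prems by (simp only: lca_size_eq_Min common_subtree_sizes_Node)
  also have "\<dots> = (if ?A = {} then ?n else Min ?A)"
  proof (cases "?A = {}")
    case False
    have fin: "finite ?A"
      by (simp add: finite_common_subtree_sizes)
    have "Min ?A < ?n"
      using less Min_in[OF fin False] by blast
    then show ?thesis
      unfolding Min_insert[OF fin False] if_not_P[OF False] by simp
  qed simp
  also have "\<dots> = lca_card (Node l r) u v"
    using Node.IH Node.prems
    by (auto simp: common_subtree_sizes_eq_empty_iff common_subtree_sizes_eq_empty_iff[THEN iffD2]
        lca_size_eq_Min)
  finally show ?case .
qed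

lemma cut_weight_Un_left:
  "finite A \<Longrightarrow> finite B \<Longrightarrow> A \<inter> B = {} \<Longrightarrow>
   cut_weight w (A \<union> B) C = cut_weight w A C + cut_weight w B C"
  unfolding cut_weight_def by (rule sum.union_disjoint)

lemma cut_weight_Un_right:
  "finite B \<Longrightarrow> finite C \<Longrightarrow> B \<inter> C = {} \<Longrightarrow>
   cut_weight w A (B \<union> C) = cut_weight w A B + cut_weight w A C"
  unfolding cut_weight_def by (simp add: sum.union_disjoint sum.distrib)

lemma cut_weight_nonneg: "(\<And>u v. 0 \<le> w u v) \<Longrightarrow> 0 \<le> cut_weight w A B"
  unfolding cut_weight_def by (simp add: sum_nonneg)

lemma cut_weight_commute: "(\<And>u v. w u v = w v u) \<Longrightarrow> cut_weight w A B = cut_weight w B A"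
  unfolding cut_weight_def by (subst sum.swap) simp

fun level_cut :: "'a set \<Rightarrow> ('a \<Rightarrow> 'a \<Rightarrow> real) \<Rightarrow> nat \<Rightarrow> 'a hctree \<Rightarrow> real" where
  "level_cut V w k (Leaf a) = cut_weight w {a} (V - {a})"
| "level_cut V w k (Node l r) =
     (if length (leaves (Node l r)) \<le> k
      then cut_weight w (set (leaves (Node l r))) (V - set (leaves (Node l r)))
      else level_cut V w k l + level_cut V w k r)"

lemma level_cut_eq_cut_weight:
  "length (leaves S) \<le> k \<Longrightarrow> level_cut V w k S = cut_weight w (set (leaves S)) (V - set (leaves S))"
  by (cases S) auto

lemma level_cut_nonneg: "(\<And>u v. 0 \<le> w u v) \<Longrightarrow> 0 \<le> level_cut V w k S"
  by (induction S) (auto simp: cut_weight_nonneg)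

lemma sum_lessThan_eq_add_const:
  fixes f :: "nat \<Rightarrow> real"
  assumes "a \<le> b" "\<And>k. a \<le> k \<Longrightarrow> f k = c"
  shows "(\<Sum>k<b. f k) = (\<Sum>k<a. f k) + real (b - a) * c"
  using assms(1)
proof (induction b rule: dec_induct)
  case (step n)
  then show ?case using assms(2)[OF step.hyps(1)] by (simp add: Suc_diff_le algebra_simps)
qed simp

lemma pair_sum_lca_card_Node:
  assumes "distinct (leaves (Node l r))"
  defines "L \<equiv> set (leaves l)" and "R \<equiv> set (leaves r)" and "n \<equiv> real (length (leaves (Node l r)))"
  shows "(\<Sum>u\<in>L \<union> R. \<Sum>v\<in>L \<union> R. w u v * real (lca_card (Node l r) u v))
    = (\<Sum>u\<in>L. \<Sum>v\<in>L. w u v * real (lca_card l u v)) + (\<Sum>u\<in>R. \<Sum>v\<in>R. w u v * real (lca_card r u v))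
      + n * (cut_weight w L R + cut_weight w R L)"
proof -
  have disj: "L \<inter> R = {}" using assms(1) by (simp add: L_def R_def)
  let ?f = "\<lambda>u v. w u v * real (lca_card (Node l r) u v)"
  have cross: "?f u v = n * w u v" if "u \<in> L \<and> v \<in> R \<or> u \<in> R \<and> v \<in> L" for u v
    using that disj by (auto simp: L_def R_def n_def)
  have "(\<Sum>u\<in>L \<union> R. \<Sum>v\<in>L \<union> R. ?f u v)
    = (\<Sum>u\<in>L. \<Sum>v\<in>L. ?f u v) + (\<Sum>u\<in>R. \<Sum>v\<in>R. ?f u v)
      + ((\<Sum>u\<in>L. \<Sum>v\<in>R. ?f u v) + (\<Sum>u\<in>R. \<Sum>v\<in>L. ?f u v))"
    using disj by (simp add: L_def R_def sum.union_disjoint sum.distrib)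
  also have "(\<Sum>u\<in>L. \<Sum>v\<in>L. ?f u v) = (\<Sum>u\<in>L. \<Sum>v\<in>L. w u v * real (lca_card l u v))"
    by (simp add: L_def)
  also have "(\<Sum>u\<in>R. \<Sum>v\<in>R. ?f u v) = (\<Sum>u\<in>R. \<Sum>v\<in>R. w u v * real (lca_card r u v))"
    using disj by (intro sum.cong refl) (auto simp: L_def R_def)
  also have "(\<Sum>u\<in>L. \<Sum>v\<in>R. ?f u v) = n * cut_weight w L R"
    by (simp add: cross cut_weight_def sum_distrib_left del: lca_card.simps)
  also have "(\<Sum>u\<in>R. \<Sum>v\<in>L. ?f u v) = n * cut_weight w R L"
    by (simp add: cross cut_weight_def sum_distrib_left del: lca_card.simps)
  finally show ?thesis by (simp add: algebra_simps)
qed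

lemma sum_level_cut_Node:
  fixes l r :: "'a hctree"
  defines "L \<equiv> set (leaves l)" and "R \<equiv> set (leaves r)"
    and "nl \<equiv> length (leaves l)" and "nr \<equiv> length (leaves r)"
  shows "(\<Sum>k<length (leaves (Node l r)). level_cut V w k (Node l r))
    = (\<Sum>k<nl. level_cut V w k l) + real nr * cut_weight w L (V - L)
      + (\<Sum>k<nr. level_cut V w k r) + real nl * cut_weight w R (V - R)"
proof -
  have "(\<Sum>k<nl + nr. level_cut V w k (Node l r))
      = (\<Sum>k<nl + nr. level_cut V w k l) + (\<Sum>k<nl + nr. level_cut V w k r)"
    by (simp add: nl_def nr_def sum.distrib)
  also have "(\<Sum>k<nl + nr. level_cut V w k l) = (\<Sum>k<nl. level_cut V w k l) + real nr * cut_weight w L (V - L)"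
    using sum_lessThan_eq_add_const[of nl "nl + nr" "\<lambda>k. level_cut V w k l"]
    by (simp add: L_def nl_def level_cut_eq_cut_weight)
  also have "(\<Sum>k<nl + nr. level_cut V w k r) = (\<Sum>k<nr. level_cut V w k r) + real nl * cut_weight w R (V - R)"
    using sum_lessThan_eq_add_const[of nr "nl + nr" "\<lambda>k. level_cut V w k r"]
    by (simp add: R_def nr_def level_cut_eq_cut_weight)
  finally show ?thesis by (simp add: nl_def nr_def algebra_simps)
qed

lemma pair_sum_lca_card_eq_sum_level_cut:
  assumes "finite V" "\<And>u. w u u = 0"
  shows "distinct (leaves S) \<Longrightarrow> set (leaves S) \<subseteq> V \<Longrightarrow>
    (\<Sum>u\<in>set (leaves S). \<Sum>v\<in>set (leaves S). w u v * real (lca_card S u v))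
    + real (length (leaves S)) * cut_weight w (set (leaves S)) (V - set (leaves S))
    = (\<Sum>k<length (leaves S). level_cut V w k S)"
proof (induction S)
  case (Leaf a)
  then show ?case using assms(2) by simp
next
  case (Node l r)
  define L R where "L = set (leaves l)" and "R = set (leaves r)"
  define Out where "Out = V - (L \<union> R)"
  have disj: "L \<inter> R = {}" and LR: "L \<subseteq> V" "R \<subseteq> V"
    using Node.prems by (auto simp: L_def R_def)
  have fin: "finite L" "finite R" "finite Out"
    using assms(1) by (auto simp: L_def R_def Out_def)
  have "V - L = R \<union> Out" "V - R = L \<union> Out" "R \<inter> Out = {}" "L \<inter> Out = {}"
    using LR disj by (auto simp: Out_def)
  then have "cut_weight w L (V - L) = cut_weight w L R + cut_weight w L Out"
    and "cut_weight w R (V - R) = cut_weight w R L + cut_weight w R Out"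
    using fin by (simp_all add: cut_weight_Un_right)
  moreover have "cut_weight w (L \<union> R) Out = cut_weight w L Out + cut_weight w R Out"
    using fin(1,2) disj by (rule cut_weight_Un_left)
  moreover note pair_sum_lca_card_Node[OF Node.prems(1), of w] sum_level_cut_Node[of V w l r]
    Node.IH[unfolded L_def[symmetric] R_def[symmetric]]
  ultimately show ?case
    using Node.prems by (simp add: L_def[symmetric] R_def[symmetric] Out_def[symmetric] algebra_simps)
qed

lemma hc_cost_eq_sum_level_cut:
  assumes "wgraph V w" "is_hctree V T"
  shows "hc_cost V w T = (\<Sum>k<card V. level_cut V w k T) / 2"
proof -
  have fin: "finite V" and diag: "\<And>u. w u u = 0" and T: "distinct (leaves T)" "set (leaves T) = V"
    using assms by (auto simp: wgraph_def is_hctree_def)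
  have "(\<Sum>u\<in>V. \<Sum>v\<in>V. w u v * real (lca_size T u v)) = (\<Sum>u\<in>V. \<Sum>v\<in>V. w u v * real (lca_card T u v))"
    using T lca_size_eq_lca_card[of T] by (intro sum.cong refl) auto
  also have "\<dots> = (\<Sum>k<card V. level_cut V w k T)"
    using pair_sum_lca_card_eq_sum_level_cut[of V w, OF fin diag T(1)] T
    by (simp add: distinct_card[OF T(1), symmetric] cut_weight_def)
  finally show ?thesis by (simp add: hc_cost_def)
qed

lemma sum_le_level_cut:
  assumes "\<And>X. X \<subseteq> V \<Longrightarrow> X \<noteq> {} \<Longrightarrow> card X \<le> max k 1 \<Longrightarrow> sum c X \<le> cut_weight w X (V - X)"
  shows "distinct (leaves S) \<Longrightarrow> set (leaves S) \<subseteq> V \<Longrightarrow> sum c (set (leaves S)) \<le> level_cut V w k S"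
proof (induction S)
  case (Leaf a)
  then show ?case using assms[of "{a}"] by simp
next
  case (Node l r)
  show ?case
  proof (cases "length (leaves (Node l r)) \<le> k")
    case True
    then have "card (set (leaves (Node l r))) \<le> max k 1"
      using distinct_card[OF Node.prems(1)] by simp
    moreover have "set (leaves (Node l r)) \<noteq> {}"
      using length_leaves_pos[of "Node l r"] by (auto simp del: leaves.simps)
    ultimately show ?thesis using assms[OF Node.prems(2)] True by simp
  next
    case False
    have "sum c (set (leaves (Node l r))) = sum c (set (leaves l)) + sum c (set (leaves r))"
      using Node.prems(1) by (simp add: sum.union_disjoint)
    also have "\<dots> \<le> level_cut V w k l + level_cut V w k r"
      using Node.IH Node.prems by (intro add_mono) auto
    finally show ?thesis using False by simp
  qed
qed

lemma deg_nonneg: "wgraph V w \<Longrightarrow> 0 \<le> deg V w u"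
  unfolding wgraph_def deg_def by (simp add: sum_nonneg)

lemma vol_nonneg: "wgraph V w \<Longrightarrow> 0 \<le> vol V w S"
  unfolding vol_def by (simp add: sum_nonneg deg_nonneg)

lemma vol_Diff: "finite V \<Longrightarrow> S \<subseteq> V \<Longrightarrow> vol V w (V - S) = vol V w V - vol V w S"
  unfolding vol_def by (simp add: sum_diff)

lemma deg_le_dmax: "finite V \<Longrightarrow> u \<in> V \<Longrightarrow> deg V w u \<le> dmax V w"
  unfolding dmax_def by simp

lemma dmin_le_deg: "finite V \<Longrightarrow> u \<in> V \<Longrightarrow> dmin V w \<le> deg V w u"
  unfolding dmin_def by simp

lemma dmin_nonneg:
  assumes "wgraph V w" "V \<noteq> {}"
  shows "0 \<le> dmin V w"
proof -
  have "dmin V w \<in> deg V w ` V"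
    using assms unfolding dmin_def wgraph_def by (intro Min_in) auto
  then show ?thesis using deg_nonneg[OF assms(1)] by auto
qed

lemma dmax_nonneg:
  assumes "wgraph V w" "V \<noteq> {}"
  shows "0 \<le> dmax V w"
proof -
  obtain u where "u \<in> V" using assms(2) by blast
  then show ?thesis
    using assms(1) deg_nonneg[OF assms(1), of u] deg_le_dmax[of V u w] by (simp add: wgraph_def)
qed

lemma vol_le_card_mult_dmax: "finite V \<Longrightarrow> S \<subseteq> V \<Longrightarrow> vol V w S \<le> real (card S) * dmax V w"
  unfolding vol_def by (intro sum_bounded_above deg_le_dmax) auto

lemma card_mult_dmin_le_vol: "finite V \<Longrightarrow> S \<subseteq> V \<Longrightarrow> real (card S) * dmin V w \<le> vol V w S"
  unfolding vol_def by (intro sum_bounded_below dmin_le_deg) auto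

text \<open>The other endpoints of the edges at u contribute at least deg u to the volume.\<close>
lemma two_deg_le_vol:
  assumes g: "wgraph V w" and u: "u \<in> V"
  shows "2 * deg V w u \<le> vol V w V"
proof -
  have fin: "finite V" using g by (simp add: wgraph_def)
  have "deg V w u = (\<Sum>v\<in>V - {u}. w v u)"
    using g fin u by (simp add: deg_def sum.remove wgraph_def)
  also have "\<dots> \<le> (\<Sum>v\<in>V - {u}. deg V w v)"
    using g fin u unfolding deg_def by (intro sum_mono member_le_sum) (auto simp: wgraph_def)
  finally show ?thesis
    using fin u by (simp add: vol_def sum.remove)
qed

lemma conductance_le_set_conductance:
  assumes "finite V" "S \<noteq> {}" "S \<subset> V" "vol V w S \<le> vol V w V / 2"
  shows "conductance V w \<le> set_conductance V w S"
proof -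
  have "finite {S. S \<noteq> {} \<and> S \<subset> V \<and> vol V w S \<le> vol V w V / 2}"
    using assms(1) by (rule finite_subset[rotated, OF finite_Pow_iff[THEN iffD2]]) auto
  then show ?thesis unfolding conductance_def using assms by simp
qed

lemma conductance_mult_vol_le_cut_weight:
  assumes g: "wgraph V w" and S: "S \<noteq> {}" "S \<subset> V" "vol V w S \<le> vol V w V / 2"
  shows "conductance V w * vol V w S \<le> cut_weight w S (V - S)"
proof (cases "vol V w S = 0")
  case True
  then show ?thesis using g cut_weight_nonneg[of w] by (simp add: wgraph_def)
next
  case False
  then have "0 < vol V w S" using vol_nonneg[OF g, of S] by simp
  moreover have "conductance V w \<le> cut_weight w S (V - S) / vol V w S"
    using conductance_le_set_conductance[OF _ S] g by (simp add: set_conductance_def wgraph_def)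
  ultimately show ?thesis by (simp add: pos_le_divide_eq)
qed

lemma conductance_nonneg:
  assumes g: "wgraph V w" and "card V \<ge> 2"
  shows "0 \<le> conductance V w"
proof -
  let ?C = "{S. S \<noteq> {} \<and> S \<subset> V \<and> vol V w S \<le> vol V w V / 2}"
  have fin: "finite V" using g by (simp add: wgraph_def)
  obtain u where u: "u \<in> V"
    using assms(2) by fastforce
  moreover have "V \<noteq> {u}"
    using assms(2) by auto
  ultimately have "{u} \<in> ?C"
    using two_deg_le_vol[OF g u] by (auto simp: vol_def)
  moreover have "finite ?C"
    using fin by (rule finite_subset[rotated, OF finite_Pow_iff[THEN iffD2]]) auto
  moreover have "0 \<le> set_conductance V w S" for S
    using g cut_weight_nonneg[of w] vol_nonneg[OF g] by (simp add: set_conductance_def wgraph_def)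
  ultimately show ?thesis
    unfolding conductance_def by (subst Min_ge_iff) auto
qed

lemma conductance_mult_min_vol_le_cut_weight:
  assumes g: "wgraph V w" and X: "X \<subseteq> V" "X \<noteq> {}"
  shows "conductance V w * min (vol V w X) (vol V w V - vol V w X) \<le> cut_weight w X (V - X)"
proof -
  have fin: "finite V" and sym: "\<And>u v. w u v = w v u"
    using g by (auto simp: wgraph_def)
  consider "X = V" | "X \<noteq> V" "vol V w X \<le> vol V w V / 2" | "X \<noteq> V" "\<not> vol V w X \<le> vol V w V / 2"
    by blast
  then show ?thesis
  proof cases
    case 1
    then show ?thesis using vol_nonneg[OF g, of V] by (simp add: cut_weight_def)
  next
    case 2
    then show ?thesis
      using conductance_mult_vol_le_cut_weight[OF g X(2)] X(1) by (simp add: min_def psubset_eq)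
  next
    case 3
    have "V - X \<noteq> {}" "V - X \<subset> V" "V - (V - X) = X"
      using X 3(1) by auto
    then have "conductance V w * vol V w (V - X) \<le> cut_weight w X (V - X)"
      using conductance_mult_vol_le_cut_weight[OF g, of "V - X"] 3(2) vol_Diff[OF fin X(1)]
        cut_weight_commute[of w, OF sym]
      by simp
    then show ?thesis using 3(2) vol_Diff[OF fin X(1)] by (simp add: min_def)
  qed
qed

lemma Suc_mult_le_sum_lessThan:
  fixes f :: "nat \<Rightarrow> real"
  assumes "m < n" "\<And>k. k \<le> m \<Longrightarrow> B \<le> f k" "\<And>k. 0 \<le> f k"
  shows "real (Suc m) * B \<le> (\<Sum>k<n. f k)"
proof -
  have "real (Suc m) * B = (\<Sum>k\<le>m. B)" by simp
  also have "\<dots> \<le> (\<Sum>k\<le>m. f k)" using assms(2) by (intro sum_mono) auto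
  also have "\<dots> \<le> (\<Sum>k<n. f k)" using assms(1,3) by (intro sum_mono2) auto
  finally show ?thesis .
qed

lemma hc_cost_nonneg: "wgraph V w \<Longrightarrow> 0 \<le> hc_cost V w T"
  unfolding hc_cost_def wgraph_def by (simp add: sum_nonneg)

lemma hc_cost_ge_level_cut_bound:
  assumes g: "wgraph V w" and T: "is_hctree V T" and "m < card V"
    and "\<And>k. k \<le> m \<Longrightarrow> B \<le> level_cut V w k T"
  shows "real (Suc m) * B / 2 \<le> hc_cost V w T"
  using Suc_mult_le_sum_lessThan[of m "card V" B "\<lambda>k. level_cut V w k T"] assms
    level_cut_nonneg[of w V] hc_cost_eq_sum_level_cut[OF g T]
  by (simp add: wgraph_def)

lemma conductance_mult_vol_le_level_cut:
  assumes g: "wgraph V w" and T: "is_hctree V T" and k: "2 * real k * dmax V w \<le> vol V w V"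
  shows "conductance V w * vol V w V \<le> level_cut V w k T"
proof -
  have fin: "finite V" using g by (simp add: wgraph_def)
  have "(\<Sum>u\<in>X. conductance V w * deg V w u) \<le> cut_weight w X (V - X)"
    if X: "X \<subseteq> V" "X \<noteq> {}" "card X \<le> max k 1" for X
  proof -
    have "2 * vol V w X \<le> vol V w V"
    proof (cases "card X \<le> 1")
      case True
      moreover have "finite X" using X(1) fin by (rule finite_subset)
      ultimately have "card X = 1" using X(2) by (simp add: le_Suc_eq card_0_eq)
      then obtain u where "X = {u}" by (rule card_1_singletonE)
      then show ?thesis using two_deg_le_vol[OF g] X(1) by (simp add: vol_def)
    next
      case False
      have "vol V w X \<le> real (card X) * dmax V w"
        using fin X(1) by (rule vol_le_card_mult_dmax)
      also have "\<dots> \<le> real k * dmax V w"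
        using False X dmax_nonneg[OF g] by (intro mult_right_mono) auto
      finally show ?thesis using k by simp
    qed
    then have "conductance V w * vol V w X \<le> cut_weight w X (V - X)"
      using conductance_mult_min_vol_le_cut_weight[OF g X(1,2)] by (simp add: min_def)
    then show ?thesis by (simp add: vol_def sum_distrib_left)
  qed
  then have "(\<Sum>u\<in>set (leaves T). conductance V w * deg V w u) \<le> level_cut V w k T"
    using T by (intro sum_le_level_cut) (auto simp: is_hctree_def)
  then show ?thesis using T by (simp add: is_hctree_def vol_def sum_distrib_left)
qed

lemma conductance_mult_dmin_le_level_cut:
  assumes g: "wgraph V w" and T: "is_hctree V T" and "2 \<le> card V" "2 * k \<le> card V"
  shows "conductance V w * dmin V w * real (card V) \<le> level_cut V w k T"
proof -
  have fin: "finite V" using g by (simp add: wgraph_def)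
  have "(\<Sum>u\<in>X. conductance V w * dmin V w) \<le> cut_weight w X (V - X)"
    if X: "X \<subseteq> V" "X \<noteq> {}" "card X \<le> max k 1" for X
  proof -
    have "card X \<le> card (V - X)"
      using X assms(3,4) card_Diff_subset[OF finite_subset[OF X(1) fin] X(1)] by linarith
    then have "real (card X) * dmin V w \<le> real (card (V - X)) * dmin V w"
      using dmin_nonneg[OF g] X by (intro mult_right_mono) auto
    also have "\<dots> \<le> vol V w V - vol V w X"
      using card_mult_dmin_le_vol[OF fin, of "V - X"] vol_Diff[OF fin X(1)] by simp
    finally have "real (card X) * dmin V w \<le> min (vol V w X) (vol V w V - vol V w X)"
      using card_mult_dmin_le_vol[OF fin X(1)] by simp
    then have "conductance V w * (real (card X) * dmin V w)
        \<le> conductance V w * min (vol V w X) (vol V w V - vol V w X)"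
      using conductance_nonneg[OF g assms(3)] by (rule mult_left_mono)
    then have "conductance V w * (real (card X) * dmin V w) \<le> cut_weight w X (V - X)"
      using conductance_mult_min_vol_le_cut_weight[OF g X(1,2)] by linarith
    then show ?thesis by (simp add: algebra_simps)
  qed
  then have "(\<Sum>u\<in>set (leaves T). conductance V w * dmin V w) \<le> level_cut V w k T"
    using T by (intro sum_le_level_cut) (auto simp: is_hctree_def)
  then show ?thesis using T by (simp add: is_hctree_def distinct_card algebra_simps)
qed

lemma hc_cost_ge_vol_sq_div_dmax:
  assumes g: "wgraph V w" and n: "2 \<le> card V" and T: "is_hctree V T"
  shows "conductance V w * (vol V w V ^ 2 / dmax V w) / 4 \<le> hc_cost V w T"
proof (cases "dmax V w = 0")
  case True
  then show ?thesis using hc_cost_nonneg[OF g] by simp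
next
  case False
  have fin: "finite V" and ne: "V \<noteq> {}" using g n by (auto simp: wgraph_def)
  let ?\<Phi> = "conductance V w" and ?vol = "vol V w V" and ?d = "dmax V w"
  have d: "0 < ?d" using False dmax_nonneg[OF g ne] by simp
  define x where "x = ?vol / (2 * ?d)"
  define m where "m = nat \<lfloor>x\<rfloor>"
  have x: "0 \<le> x" using d vol_nonneg[OF g] by (simp add: x_def)
  have "?vol \<le> real (card V) * ?d" using vol_le_card_mult_dmax[OF fin] by simp
  moreover have "0 < real (card V) * ?d" using d n by simp
  ultimately have "x < real (card V)" using d by (simp add: x_def divide_less_eq)
  then have "m < card V" using x by (simp add: m_def nat_less_iff floor_less_iff)
  moreover have "2 * real k * ?d \<le> ?vol" if "k \<le> m" for k
  proof -
    have "real k \<le> x" using that x by (simp add: m_def le_nat_iff le_floor_iff)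
    then show ?thesis using d by (simp add: x_def field_simps)
  qed
  ultimately have "real (Suc m) * (?\<Phi> * ?vol) / 2 \<le> hc_cost V w T"
    by (intro hc_cost_ge_level_cut_bound[OF g T] conductance_mult_vol_le_level_cut[OF g T])
  moreover have "x \<le> real (Suc m)"
    using x by (simp add: m_def) linarith
  then have "x * (?\<Phi> * ?vol) \<le> real (Suc m) * (?\<Phi> * ?vol)"
    using conductance_nonneg[OF g n] vol_nonneg[OF g] by (intro mult_right_mono) simp_all
  moreover have "x * (?\<Phi> * ?vol) / 2 = ?\<Phi> * (?vol ^ 2 / ?d) / 4"
    using d by (simp add: x_def power2_eq_square field_simps)
  ultimately show ?thesis by linarith
qed

lemma hc_cost_ge_dmin_card_sq:
  assumes g: "wgraph V w" and n: "2 \<le> card V" and T: "is_hctree V T"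
  shows "conductance V w * (dmin V w * real (card V) ^ 2) / 4 \<le> hc_cost V w T"
proof -
  let ?B = "conductance V w * dmin V w * real (card V)"
  have "V \<noteq> {}" using n by auto
  then have B: "0 \<le> ?B" using conductance_nonneg[OF g n] dmin_nonneg[OF g] by simp
  have "real (Suc (card V div 2)) * ?B / 2 \<le> hc_cost V w T"
    using n by (intro hc_cost_ge_level_cut_bound[OF g T] conductance_mult_dmin_le_level_cut[OF g T]) auto
  moreover have "real (card V) / 2 * ?B \<le> real (Suc (card V div 2)) * ?B"
    using B by (intro mult_right_mono) linarith+
  ultimately show ?thesis by (simp add: power2_eq_square algebra_simps)
qed

lemma max_vol_sq_div_dmax_dmin_card_sq:
  assumes g: "wgraph V w" and ne: "V \<noteq> {}"
  shows "max (vol V w V ^ 2 / dmax V w) (dmin V w * real (card V) ^ 2)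
    = real (card V) * vol V w V * max (davg V w / dmax V w) (dmin V w / davg V w)"
proof -
  let ?n = "real (card V)"
  have fin: "finite V" using g by (simp add: wgraph_def)
  have n: "0 < ?n" using fin ne by (simp add: card_gt_0_iff)
  have vol: "vol V w V = ?n * davg V w" using n by (simp add: davg_def vol_def)
  have dmin: "dmin V w * ?n ^ 2 = ?n * vol V w V * (dmin V w / davg V w)"
  proof (cases "davg V w = 0")
    case True
    then have "?n * dmin V w \<le> 0" using card_mult_dmin_le_vol[OF fin subset_refl, of w] vol by simp
    then have "dmin V w = 0" using n dmin_nonneg[OF g ne] by (simp add: mult_le_0_iff)
    then show ?thesis by simp
  qed (use vol in \<open>simp add: power2_eq_square\<close>)
  moreover have dmax: "vol V w V ^ 2 / dmax V w = ?n * vol V w V * (davg V w / dmax V w)"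
    using vol by (simp add: power2_eq_square)
  moreover have "0 \<le> ?n * vol V w V" using vol_nonneg[OF g] by simp
  ultimately show ?thesis by (simp only: max_mult_distrib_left if_True)
qed

theorem lemma3p2:
  fixes V :: "'a set" and w :: "'a \<Rightarrow> 'a \<Rightarrow> real" and T :: "'a hctree"
  assumes "wgraph V w"
    and "card V \<ge> 2"
    and "optimal_hctree V w T"
  shows "hc_cost V w T \<ge> 2 * conductance V w / 9 *
           max (vol V w V ^ 2 / dmax V w) (dmin V w * real (card V) ^ 2)
       \<and> 2 * conductance V w / 9 *
           max (vol V w V ^ 2 / dmax V w) (dmin V w * real (card V) ^ 2)
         = 2 * conductance V w / 9 * real (card V) * vol V w V *
           max (davg V w / dmax V w) (dmin V w / davg V w)"
proof
  let ?M = "max (vol V w V ^ 2 / dmax V w) (dmin V w * real (card V) ^ 2)"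
  have T: "is_hctree V T" and ne: "V \<noteq> {}"
    using assms(2,3) by (auto simp: optimal_hctree_def)
  have "0 \<le> conductance V w * ?M"
    using conductance_nonneg[OF assms(1,2)] dmin_nonneg[OF assms(1) ne]
    by (simp add: le_max_iff_disj)
  then have "2 * conductance V w / 9 * ?M \<le> conductance V w * ?M / 4"
    by simp
  also have "\<dots> \<le> hc_cost V w T"
    using hc_cost_ge_vol_sq_div_dmax[OF assms(1,2) T] hc_cost_ge_dmin_card_sq[OF assms(1,2) T]
    by (simp add: max_def)
  finally show "2 * conductance V w / 9 * ?M \<le> hc_cost V w T" .
  show "2 * conductance V w / 9 * ?M = 2 * conductance V w / 9 * real (card V) * vol V w V *
      max (davg V w / dmax V w) (dmin V w / davg V w)"
    using max_vol_sq_div_dmax_dmin_card_sq[OF assms(1) ne] by simp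
qed

end
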